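(* Let $R$ be a dataset of size $n$, $R'=R\cup\{z_{n+1}\}$, and suppose $\hat F_R$ is $\lambda_R$-strongly convex and $\beta_R$-smooth on a closed convex set $\mathcal{W}$ and $f$ is $L$-Lipschitz. Consider Descent-to-Delete: starting from $w'_0=w_{R'}=\arg\min_{w\in\mathcal{W}}\hat F_{R'}(w)$, run $I$ steps $w'_t=\mathrm{Proj}_{\mathcal{W}}(w'_{t-1}-\eta\nabla\hat F_R(w'_{t-1}))$ with $\eta=\frac{2}{\lambda_R+\beta_R}$, and output $w'_I+\nu$ with $\nu\sim\mathcal{N}(0,\sigma^2I_d)$; when no deletion is requested on $R$, output $w_R+\nu$ with $w_R=\arg\min_{w\in\mathcal{W}}\hat F_R(w)$ and $\nu\sim\mathcal{N}(0,\sigma^2I_d)$. Then for any $\sigma>0$ and $\varepsilon,\delta\in(0,1)$, if $I\ge I_R(\varepsilon,\delta,\sigma)$ where $$I_R(\varepsilon,\delta,\sigma):=\left\lceil\frac{\ln\!\big(\frac{L}{n\lambda_R\sigma\, b(\varepsilon,\delta)}\big)}{\ln(1/\gamma_R)}\right\rceil,\qquad b(\varepsilon,\delta)=\sqrt{2\log(1/\delta)+2\varepsilon}-\sqrt{2\log(1/\delta)},$$ the two outputs are $(\varepsilon,\delta)$-indistinguishable, i.e. the algorithm satisfies $(\varepsilon,\delta)$-unlearning.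
   Context: $f:\mathcal{W}\times\mathcal{Z}\to\mathbb{R}$ is differentiable and $L$-Lipschitz in $w$ uniformly over $z$. For a dataset $S$, $\hat F_S(w)=\frac{1}{|S|}\sum_{z\in S}f(w,z)$. $\hat F_R$ is $\lambda_R$-strongly convex if $\hat F_R(w)-\hat F_R(w')\ge\langle\nabla\hat F_R(w'),w-w'\rangle+\frac{\lambda_R}{2}\|w-w'\|^2$, and $\beta_R$-smooth if $\|\nabla\hat F_R(w)-\nabla\hat F_R(w')\|\le\beta_R\|w-w'\|$, for all $w,w'\in\mathcal{W}$. $\kappa_R=\beta_R/\lambda_R$ and $\gamma_R=\frac{\kappa_R-1}{\kappa_R+1}$. $\mathrm{Proj}_{\mathcal{W}}$ is Euclidean projection. Random variables $X,Y$ are $(\varepsilon,\delta)$-indistinguishable if for all measurable $W$, $P(X\in W)\le e^\varepsilon P(Y\in W)+\delta$ and symmetrically. *)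

theory Defs
  imports "HOL-Analysis.Analysis" "HOL-Probability.Probability"
begin

definition emp_loss :: "('a \<Rightarrow> 'z \<Rightarrow> real) \<Rightarrow> 'z list \<Rightarrow> 'a \<Rightarrow> real" where
  "emp_loss f S w = (\<Sum>z\<leftarrow>S. f w z) / real (length S)"

definition grad :: "('a::real_inner \<Rightarrow> real) \<Rightarrow> 'a \<Rightarrow> 'a" where
  "grad F w = (THE D. GDERIV F w :> D)"

definition strongly_convex_on :: "'a::real_inner set \<Rightarrow> real \<Rightarrow> ('a \<Rightarrow> real) \<Rightarrow> bool" where
  "strongly_convex_on W lam F \<longleftrightarrow>
     (\<forall>w\<in>W. \<forall>w'\<in>W. F w - F w' \<ge> inner (grad F w') (w - w') + lam / 2 * (norm (w - w'))\<^sup>2)"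

definition smooth_on :: "'a::real_inner set \<Rightarrow> real \<Rightarrow> ('a \<Rightarrow> real) \<Rightarrow> bool" where
  "smooth_on W bet F \<longleftrightarrow>
     (\<forall>w\<in>W. \<forall>w'\<in>W. norm (grad F w - grad F w') \<le> bet * norm (w - w'))"

definition proj_gd :: "'a::euclidean_space set \<Rightarrow> ('a \<Rightarrow> 'a) \<Rightarrow> real \<Rightarrow> 'a \<Rightarrow> nat \<Rightarrow> 'a" where
  "proj_gd W g eta w0 t = ((\<lambda>w. closest_point W (w - eta *\<^sub>R g w)) ^^ t) w0"

definition gaussian_iso :: "real \<Rightarrow> 'a::euclidean_space measure" where
  "gaussian_iso \<sigma> = density lborel (\<lambda>x. ennreal (\<Prod>b\<in>Basis. normal_density 0 \<sigma> (inner x b)))"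

definition gauss_output :: "real \<Rightarrow> 'a::euclidean_space \<Rightarrow> 'a measure" where
  "gauss_output \<sigma> c = distr (gaussian_iso \<sigma>) borel (\<lambda>\<nu>. c + \<nu>)"

definition indistinguishable :: "real \<Rightarrow> real \<Rightarrow> 'a measure \<Rightarrow> 'a measure \<Rightarrow> bool" where
  "indistinguishable \<epsilon> \<delta> P Q \<longleftrightarrow> sets P = sets Q \<and>
     (\<forall>A\<in>sets P. measure P A \<le> exp \<epsilon> * measure Q A + \<delta> \<and> measure Q A \<le> exp \<epsilon> * measure P A + \<delta>)"

definition b_eps_delta :: "real \<Rightarrow> real \<Rightarrow> real" where
  "b_eps_delta \<epsilon> \<delta> = sqrt (2 * ln (1 / \<delta>) + 2 * \<epsilon>) - sqrt (2 * ln (1 / \<delta>))"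

definition I_R :: "real \<Rightarrow> nat \<Rightarrow> real \<Rightarrow> real \<Rightarrow> real \<Rightarrow> real \<Rightarrow> real \<Rightarrow> int" where
  "I_R L n lam bet \<epsilon> \<delta> \<sigma> =
     (let \<kappa> = bet / lam; \<gamma> = (\<kappa> - 1) / (\<kappa> + 1) in
      \<lceil>ln (L / (real n * lam * \<sigma> * b_eps_delta \<epsilon> \<delta>)) / ln (1 / \<gamma>)\<rceil>)"

end

theory Submission
  imports Defs
begin

text \<open>Strong convexity of \<open>F\<^sub>R\<close>, the first-order optimality of \<open>w\<^sub>R\<close> and \<open>w\<^sub>R\<^sub>'\<close>, and the
  Lipschitz bound on the loss give the sensitivity bound \<open>\<parallel>w\<^sub>R\<^sub>' - w\<^sub>R\<parallel> \<le> L / (n \<lambda>)\<close>.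
  A projected gradient step with step size \<open>2 / (\<lambda> + \<beta>)\<close> contracts the distance to its fixed
  point \<open>w\<^sub>R\<close> by the factor \<open>\<gamma> = (\<beta> - \<lambda>) / (\<beta> + \<lambda>)\<close>. This rests on cocoercivity of the
  gradient, which on a constrained domain only holds locally: it is proved on relative balls
  inside \<open>W\<close> for the component of the gradient parallel to \<open>W\<close>, then chained along segments
  of the relative interior and extended to \<open>W\<close> by continuity. After \<open>I \<ge> I\<^sub>R\<close> steps the two
  centres are within \<open>\<sigma> b(\<epsilon>, \<delta>)\<close>, and for Gaussian noise with centres that close the privacy
  loss exceeds \<open>\<epsilon>\<close> only on a half-space of probability at most \<open>\<delta>\<close>.\<close>

section \<open>The Gaussian mechanism\<close>

definition iso_normal_density :: "real \<Rightarrow> 'a::euclidean_space \<Rightarrow> real" where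
  "iso_normal_density \<sigma> x = (\<Prod>b\<in>Basis. normal_density 0 \<sigma> (inner x b))"

lemma iso_normal_density_eq:
  "iso_normal_density \<sigma> (x::'a::euclidean_space) =
     (1 / sqrt (2 * pi * \<sigma>\<^sup>2)) ^ DIM('a) * exp (- (norm x)\<^sup>2 / (2 * \<sigma>\<^sup>2))"
proof -
  have "iso_normal_density \<sigma> x =
      (\<Prod>b\<in>(Basis::'a set). 1 / sqrt (2 * pi * \<sigma>\<^sup>2) * exp (- (inner x b)\<^sup>2 / (2 * \<sigma>\<^sup>2)))"
    unfolding iso_normal_density_def normal_density_def by simp
  also have "\<dots> =
      (\<Prod>b\<in>(Basis::'a set). 1 / sqrt (2 * pi * \<sigma>\<^sup>2)) * (\<Prod>b\<in>Basis. exp (- (inner x b)\<^sup>2 / (2 * \<sigma>\<^sup>2)))"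
    by (rule prod.distrib)
  also have "(\<Prod>b\<in>Basis. exp (- (inner x b)\<^sup>2 / (2 * \<sigma>\<^sup>2))) = exp (\<Sum>b\<in>Basis. - (inner x b)\<^sup>2 / (2 * \<sigma>\<^sup>2))"
    by (simp add: exp_sum)
  also have "(\<Sum>b\<in>Basis. - (inner x b)\<^sup>2 / (2 * \<sigma>\<^sup>2)) = - (\<Sum>b\<in>Basis. (inner x b)\<^sup>2) / (2 * \<sigma>\<^sup>2)"
    by (simp add: sum_divide_distrib sum_negf)
  also have "(\<Sum>b\<in>Basis. (inner x b)\<^sup>2) = (norm x)\<^sup>2"
  proof -
    have "(norm x)\<^sup>2 = (\<Sum>b\<in>Basis. inner x b * inner x b)"
      unfolding power2_norm_eq_inner by (rule euclidean_inner)
    then show ?thesis by (simp add: power2_eq_square)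
  qed
  finally show ?thesis by simp
qed

lemma borel_measurable_iso_normal_density[measurable]: "iso_normal_density \<sigma> \<in> borel_measurable borel"
  unfolding iso_normal_density_def by measurable

lemma gaussian_iso_eq_density:
  "gaussian_iso \<sigma> = density lborel (\<lambda>x. ennreal (iso_normal_density \<sigma> x))"
  unfolding gaussian_iso_def iso_normal_density_def ..

lemma prob_space_gaussian_iso:
  assumes "\<sigma> > 0"
  shows "prob_space (gaussian_iso \<sigma> :: 'a::euclidean_space measure)"
proof (rule prob_spaceI)
  have "emeasure (gaussian_iso \<sigma>) (space (gaussian_iso \<sigma> :: 'a measure)) = (\<integral>\<^sup>+x. ennreal (iso_normal_density \<sigma> (x::'a)) \<partial>lborel)"
    unfolding gaussian_iso_eq_density by (simp add: emeasure_density)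
  also have "(\<integral>\<^sup>+x. ennreal (iso_normal_density \<sigma> (x::'a)) \<partial>lborel) =
      (\<integral>\<^sup>+x. (\<Prod>b\<in>Basis. ennreal (normal_density 0 \<sigma> ((x::'a) \<bullet> b))) \<partial>lborel)"
    unfolding iso_normal_density_def by (subst prod_ennreal) auto
  also have "\<dots> = (\<Prod>b\<in>(Basis::'a set). \<integral>\<^sup>+y. ennreal (normal_density 0 \<sigma> y) \<partial>lborel)"
    by (rule nn_integral_lborel_prod) auto
  also have "(\<integral>\<^sup>+y. ennreal (normal_density 0 \<sigma> y) \<partial>lborel) = 1"
    using assms by (subst nn_integral_eq_integral) auto
  finally show "emeasure (gaussian_iso \<sigma>) (space (gaussian_iso \<sigma> :: 'a measure)) = 1"
    by simp
qed

lemma prob_space_gauss_output: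
  assumes "\<sigma> > 0"
  shows "prob_space (gauss_output \<sigma> (c::'a::euclidean_space))"
  unfolding gauss_output_def
  by (rule prob_space.prob_space_distr[OF prob_space_gaussian_iso[OF assms]])
     (simp add: gaussian_iso_def)

lemma nn_integral_lborel_translate:
  fixes c :: "'a::euclidean_space"
  assumes [measurable]: "g \<in> borel_measurable borel"
  shows "(\<integral>\<^sup>+x. g (c + x) \<partial>lborel) = (\<integral>\<^sup>+x. g x \<partial>lborel)"
proof -
  have "(\<integral>\<^sup>+x. g x \<partial>lborel) = (\<integral>\<^sup>+x. g x \<partial>distr lborel borel ((+) c))"
    by (simp add: lborel_distr_plus)
  also have "\<dots> = (\<integral>\<^sup>+x. g (c + x) \<partial>lborel)"
    by (rule nn_integral_distr) auto
  finally show ?thesis ..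
qed

lemma gauss_output_eq_density:
  "gauss_output \<sigma> c = density lborel (\<lambda>x. ennreal (iso_normal_density \<sigma> (x - c)))"
proof (rule measure_eqI)
  fix A :: "'a set" assume "A \<in> sets (gauss_output \<sigma> c)"
  then have [measurable]: "A \<in> sets borel" by (simp add: gauss_output_def)
  have "(+) c \<in> borel_measurable (borel :: 'a measure)" by measurable
  then have vimage: "(+) c -` A \<in> sets borel"
    using measurable_sets[of "(+) c" borel borel A] by simp
  have "emeasure (gauss_output \<sigma> c) A = emeasure (gaussian_iso \<sigma>) ((+) c -` A)"
    unfolding gauss_output_def by (subst emeasure_distr) (auto simp: gaussian_iso_def)
  also have "\<dots> = (\<integral>\<^sup>+x. ennreal (iso_normal_density \<sigma> ((c + x) - c)) * indicator A (c + x) \<partial>lborel)"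
    unfolding gaussian_iso_eq_density using vimage by (subst emeasure_density) (auto simp: indicator_def)
  also have "\<dots> = (\<integral>\<^sup>+x. ennreal (iso_normal_density \<sigma> (x - c)) * indicator A x \<partial>lborel)"
    by (rule nn_integral_lborel_translate[where g = "\<lambda>x. ennreal (iso_normal_density \<sigma> (x - c)) * indicator A x"])
       measurable
  finally show "emeasure (gauss_output \<sigma> c) A =
      emeasure (density lborel (\<lambda>x. ennreal (iso_normal_density \<sigma> (x - c)))) A"
    by (simp add: emeasure_density)
qed (simp add: gauss_output_def)

text \<open>A Chernoff bound obtained by change of measure: translating the half-space by
  \<open>s *\<^sub>R \<Delta>\<close> onto a half-space through the origin costs at most the factor
  \<open>exp (- (s * norm \<Delta>)\<^sup>2 / (2 * \<sigma>\<^sup>2))\<close> in the density.\<close>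
lemma emeasure_gaussian_iso_halfspace_le:
  fixes \<Delta> :: "'a::euclidean_space"
  assumes "\<sigma> > 0" "s \<ge> 0"
  shows "emeasure (gaussian_iso \<sigma>) {\<nu>. s * (norm \<Delta>)\<^sup>2 < inner \<nu> \<Delta>}
           \<le> exp (- (s * norm \<Delta>)\<^sup>2 / (2 * \<sigma>\<^sup>2))"
proof -
  let ?B = "{\<nu>::'a. s * (norm \<Delta>)\<^sup>2 < inner \<nu> \<Delta>}"
  let ?E = "exp (- (s * norm \<Delta>)\<^sup>2 / (2 * \<sigma>\<^sup>2))"
  let ?p = "iso_normal_density \<sigma> :: 'a \<Rightarrow> real"
  have [measurable]: "?B \<in> sets borel"
    by (rule borel_open, rule open_Collect_less) (auto intro: continuous_intros)
  have shift: "ennreal (?p (s *\<^sub>R \<Delta> + \<mu>)) * indicator ?B (s *\<^sub>R \<Delta> + \<mu>) \<le> ennreal ?E * ennreal (?p \<mu>)"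
    for \<mu>
  proof (cases "inner \<mu> \<Delta> > 0")
    case True
    have "(norm (s *\<^sub>R \<Delta> + \<mu>))\<^sup>2 = s\<^sup>2 * inner \<Delta> \<Delta> + 2 * s * inner \<mu> \<Delta> + inner \<mu> \<mu>"
      unfolding power2_norm_eq_inner
      by (simp add: inner_add inner_commute power2_eq_square algebra_simps)
    also have "\<dots> = (s * norm \<Delta>)\<^sup>2 + 2 * s * inner \<mu> \<Delta> + (norm \<mu>)\<^sup>2"
      by (simp add: power_mult_distrib power2_norm_eq_inner)
    finally have "(s * norm \<Delta>)\<^sup>2 + (norm \<mu>)\<^sup>2 \<le> (norm (s *\<^sub>R \<Delta> + \<mu>))\<^sup>2"
      using True assms by simp
    then have "exp (- (norm (s *\<^sub>R \<Delta> + \<mu>))\<^sup>2 / (2 * \<sigma>\<^sup>2)) \<le> ?E * exp (- (norm \<mu>)\<^sup>2 / (2 * \<sigma>\<^sup>2))"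
      using assms by (simp add: exp_add[symmetric] divide_simps)
    then have "?p (s *\<^sub>R \<Delta> + \<mu>) \<le> ?E * ?p \<mu>"
      unfolding iso_normal_density_eq by (simp add: mult.left_commute mult_left_mono)
    then show ?thesis
      by (simp add: ennreal_mult'[symmetric] ennreal_leI indicator_def)
  next
    case False
    then have "s *\<^sub>R \<Delta> + \<mu> \<notin> ?B"
      by (simp add: inner_add_left power2_norm_eq_inner)
    then show ?thesis by simp
  qed
  have "emeasure (gaussian_iso \<sigma>) ?B = (\<integral>\<^sup>+\<nu>. ennreal (?p \<nu>) * indicator ?B \<nu> \<partial>lborel)"
    unfolding gaussian_iso_eq_density by (simp add: emeasure_density)
  also have "\<dots> = (\<integral>\<^sup>+\<mu>. ennreal (?p (s *\<^sub>R \<Delta> + \<mu>)) * indicator ?B (s *\<^sub>R \<Delta> + \<mu>) \<partial>lborel)"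
    by (rule nn_integral_lborel_translate[symmetric, where g = "\<lambda>x. ennreal (?p x) * indicator ?B x"])
       measurable
  also have "\<dots> \<le> (\<integral>\<^sup>+\<mu>. ennreal ?E * ennreal (?p \<mu>) \<partial>lborel)"
    by (rule nn_integral_mono) (rule shift)
  also have "\<dots> = ennreal ?E * emeasure (gaussian_iso \<sigma> :: 'a measure) UNIV"
    unfolding gaussian_iso_eq_density by (simp add: emeasure_density nn_integral_cmult)
  also have "emeasure (gaussian_iso \<sigma> :: 'a measure) UNIV = 1"
    using prob_space.emeasure_space_1[OF prob_space_gaussian_iso[OF assms(1)]]
    by (simp add: gaussian_iso_def)
  finally show ?thesis by simp
qed

lemma emeasure_density_le_outside:
  fixes f g :: "'a \<Rightarrow> ennreal"
  assumes [measurable]: "f \<in> borel_measurable M" "g \<in> borel_measurable M" "A \<in> sets M" "B \<in> sets M"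
    and le: "\<And>x. x \<in> space M \<Longrightarrow> x \<notin> B \<Longrightarrow> f x \<le> k * g x"
  shows "emeasure (density M f) A \<le> k * emeasure (density M g) A + emeasure (density M f) B"
proof -
  have "emeasure (density M f) A = (\<integral>\<^sup>+x. f x * indicator A x \<partial>M)"
    by (simp add: emeasure_density)
  also have "\<dots> \<le> (\<integral>\<^sup>+x. k * (g x * indicator A x) + f x * indicator B x \<partial>M)"
  proof (rule nn_integral_mono)
    fix x assume "x \<in> space M"
    then show "f x * indicator A x \<le> k * (g x * indicator A x) + f x * indicator B x"
      using le[of x] by (cases "x \<in> B") (auto simp: indicator_def)
  qed
  also have "\<dots> = k * emeasure (density M g) A + emeasure (density M f) B"
    by (simp add: nn_integral_add nn_integral_cmult emeasure_density)
  finally show ?thesis .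
qed

lemma b_eps_delta_pos:
  assumes "0 < \<epsilon>" "0 < \<delta>" "\<delta> < 1"
  shows "b_eps_delta \<epsilon> \<delta> > 0"
proof -
  have "ln (1 / \<delta>) > 0" using assms by (subst ln_div) auto
  then show ?thesis using assms(1) unfolding b_eps_delta_def by simp
qed

text \<open>\<open>b_eps_delta \<epsilon> \<delta>\<close> is the largest \<open>r > 0\<close> with \<open>\<epsilon> / r - r / 2 \<ge> sqrt (2 * ln (1 / \<delta>))\<close>:
  for a shift by \<open>r\<close> standard deviations, the privacy loss exceeds \<open>\<epsilon>\<close> only beyond
  \<open>\<epsilon> / r - r / 2\<close> standard deviations, which has Gaussian tail probability at most \<open>\<delta>\<close>.\<close>
lemma b_eps_delta_tail:
  assumes r: "0 < r" "r \<le> b_eps_delta \<epsilon> \<delta>" and "0 < \<epsilon>" "0 < \<delta>" "\<delta> < 1"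
  shows "0 \<le> \<epsilon> / r - r / 2" and "exp (- (\<epsilon> / r - r / 2)\<^sup>2 / 2) \<le> \<delta>"
proof -
  define c where "c = sqrt (2 * ln (1 / \<delta>))"
  have "ln (1 / \<delta>) > 0" using assms by (subst ln_div) auto
  then have c: "c \<ge> 0" "c\<^sup>2 = 2 * ln (1 / \<delta>)" unfolding c_def by auto
  have "b_eps_delta \<epsilon> \<delta> = sqrt (c\<^sup>2 + 2 * \<epsilon>) - c"
    using c(2) by (simp add: b_eps_delta_def c_def)
  then have "r + c \<le> sqrt (c\<^sup>2 + 2 * \<epsilon>)" using r(2) by simp
  then have "(r + c)\<^sup>2 \<le> (sqrt (c\<^sup>2 + 2 * \<epsilon>))\<^sup>2"
    using r(1) c(1) by (intro power_mono) auto
  also have "\<dots> = c\<^sup>2 + 2 * \<epsilon>" using assms(3) by simp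
  finally have "c * (2 * r) \<le> 2 * \<epsilon> - r\<^sup>2" by (simp add: power2_eq_square algebra_simps)
  with r(1) have "c \<le> (2 * \<epsilon> - r\<^sup>2) / (2 * r)" by (simp add: pos_le_divide_eq)
  also have "\<dots> = \<epsilon> / r - r / 2" using r(1) by (simp add: field_simps power2_eq_square)
  finally have c_le: "c \<le> \<epsilon> / r - r / 2" .
  then show "0 \<le> \<epsilon> / r - r / 2" using c(1) by linarith
  have "c\<^sup>2 \<le> (\<epsilon> / r - r / 2)\<^sup>2" by (rule power_mono[OF c_le c(1)])
  then have "- (\<epsilon> / r - r / 2)\<^sup>2 / 2 \<le> ln \<delta>" using c(2) assms by (simp add: ln_div)
  then have "exp (- (\<epsilon> / r - r / 2)\<^sup>2 / 2) \<le> exp (ln \<delta>)" by (simp only: exp_le_cancel_iff)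
  then show "exp (- (\<epsilon> / r - r / 2)\<^sup>2 / 2) \<le> \<delta>" using assms by simp
qed

text \<open>The set below is where the privacy loss \<open>ln (p\<^sub>1 x / p\<^sub>2 x)\<close>, with \<open>p\<^sub>i\<close> the density
  of \<open>gauss_output \<sigma> c\<^sub>i\<close>, exceeds \<open>\<epsilon>\<close>.\<close>
lemma emeasure_gauss_output_privacy_loss_le:
  fixes c1 c2 :: "'a::euclidean_space"
  assumes \<sigma>: "\<sigma> > 0" and \<epsilon>: "\<epsilon> > 0" and \<delta>: "0 < \<delta>" "\<delta> < 1" and "c1 \<noteq> c2"
    and close: "norm (c1 - c2) \<le> \<sigma> * b_eps_delta \<epsilon> \<delta>"
  shows "emeasure (gauss_output \<sigma> c1) {x. 2 * \<sigma>\<^sup>2 * \<epsilon> < (norm (x - c2))\<^sup>2 - (norm (x - c1))\<^sup>2} \<le> \<delta>"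
proof -
  define \<Delta> where "\<Delta> = c1 - c2"
  define r where "r = norm \<Delta> / \<sigma>"
  define t where "t = \<epsilon> / r - r / 2"
  define s where "s = t * \<sigma> / norm \<Delta>"
  let ?Bad = "{x. 2 * \<sigma>\<^sup>2 * \<epsilon> < (norm (x - c2))\<^sup>2 - (norm (x - c1))\<^sup>2}"
  have \<Delta>: "norm \<Delta> > 0" unfolding \<Delta>_def using \<open>c1 \<noteq> c2\<close> by simp
  have "0 < r" "r \<le> b_eps_delta \<epsilon> \<delta>"
    unfolding r_def \<Delta>_def using \<Delta> \<sigma> close by (auto simp: \<Delta>_def pos_divide_le_eq mult.commute)
  note t = b_eps_delta_tail[OF this \<epsilon> \<delta>, folded t_def]
  have "s \<ge> 0" unfolding s_def using t(1) \<sigma> \<Delta> by simp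
  have s: "s * norm \<Delta> = t * \<sigma>" unfolding s_def using \<Delta> by simp
  have "(+) c1 -` ?Bad = {\<nu>. s * (norm \<Delta>)\<^sup>2 < inner \<nu> \<Delta>}"
  proof -
    have "(norm (c1 + \<nu> - c2))\<^sup>2 - (norm (c1 + \<nu> - c1))\<^sup>2 = 2 * inner \<nu> \<Delta> + (norm \<Delta>)\<^sup>2" for \<nu>
      unfolding \<Delta>_def power2_norm_eq_inner by (simp add: inner_add inner_diff inner_commute algebra_simps)
    moreover have "s * (norm \<Delta>)\<^sup>2 = \<sigma>\<^sup>2 * \<epsilon> - (norm \<Delta>)\<^sup>2 / 2"
      unfolding s_def t_def r_def using \<Delta> \<sigma> by (simp add: field_simps power2_eq_square)
    ultimately show ?thesis by auto
  qed
  moreover have "?Bad \<in> sets borel"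
    by (rule borel_open, rule open_Collect_less) (auto intro!: continuous_intros)
  ultimately have "emeasure (gauss_output \<sigma> c1) ?Bad = emeasure (gaussian_iso \<sigma>) {\<nu>. s * (norm \<Delta>)\<^sup>2 < inner \<nu> \<Delta>}"
    unfolding gauss_output_def by (subst emeasure_distr) (auto simp: gaussian_iso_def)
  also have "\<dots> \<le> exp (- (s * norm \<Delta>)\<^sup>2 / (2 * \<sigma>\<^sup>2))"
    by (rule emeasure_gaussian_iso_halfspace_le[OF \<sigma> \<open>s \<ge> 0\<close>])
  also have "\<dots> \<le> \<delta>"
  proof -
    have exponent: "- (s * norm \<Delta>)\<^sup>2 / (2 * \<sigma>\<^sup>2) = - t\<^sup>2 / 2"
      unfolding s using \<sigma> by (simp add: power_mult_distrib)
    show ?thesis unfolding exponent by (rule ennreal_leI[OF t(2)])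
  qed
  finally show ?thesis .
qed

lemma iso_normal_density_ratio_le:
  fixes x c1 c2 :: "'a::euclidean_space"
  assumes "\<sigma> > 0" "(norm (x - c2))\<^sup>2 - (norm (x - c1))\<^sup>2 \<le> 2 * \<sigma>\<^sup>2 * \<epsilon>"
  shows "iso_normal_density \<sigma> (x - c1) \<le> exp \<epsilon> * iso_normal_density \<sigma> (x - c2)"
proof -
  have "- (norm (x - c1))\<^sup>2 / (2 * \<sigma>\<^sup>2) \<le> \<epsilon> + - (norm (x - c2))\<^sup>2 / (2 * \<sigma>\<^sup>2)"
    using assms by (simp add: field_simps)
  then have "exp (- (norm (x - c1))\<^sup>2 / (2 * \<sigma>\<^sup>2)) \<le> exp \<epsilon> * exp (- (norm (x - c2))\<^sup>2 / (2 * \<sigma>\<^sup>2))"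
    by (simp add: exp_add[symmetric])
  then have "(1 / sqrt (2 * pi * \<sigma>\<^sup>2)) ^ DIM('a) * exp (- (norm (x - c1))\<^sup>2 / (2 * \<sigma>\<^sup>2))
      \<le> (1 / sqrt (2 * pi * \<sigma>\<^sup>2)) ^ DIM('a) * (exp \<epsilon> * exp (- (norm (x - c2))\<^sup>2 / (2 * \<sigma>\<^sup>2)))"
    by (rule mult_left_mono) simp
  then show ?thesis
    unfolding iso_normal_density_eq by (simp add: mult.left_commute)
qed

lemma measure_gauss_output_le:
  fixes c1 c2 :: "'a::euclidean_space"
  assumes \<sigma>: "\<sigma> > 0" and \<epsilon>: "\<epsilon> > 0" and \<delta>: "0 < \<delta>" "\<delta> < 1"
    and close: "norm (c1 - c2) \<le> \<sigma> * b_eps_delta \<epsilon> \<delta>" and A: "A \<in> sets borel"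
  shows "measure (gauss_output \<sigma> c1) A \<le> exp \<epsilon> * measure (gauss_output \<sigma> c2) A + \<delta>"
proof (cases "c1 = c2")
  case True
  have "measure (gauss_output \<sigma> c1) A \<le> exp \<epsilon> * measure (gauss_output \<sigma> c1) A"
    using \<epsilon> by (simp add: mult_le_cancel_right1)
  then show ?thesis using True \<delta> by simp
next
  case False
  interpret P1: prob_space "gauss_output \<sigma> c1" by (rule prob_space_gauss_output[OF \<sigma>])
  interpret P2: prob_space "gauss_output \<sigma> c2" by (rule prob_space_gauss_output[OF \<sigma>])
  let ?Bad = "{x. 2 * \<sigma>\<^sup>2 * \<epsilon> < (norm (x - c2))\<^sup>2 - (norm (x - c1))\<^sup>2}"
  have "?Bad \<in> sets borel"
    by (rule borel_open, rule open_Collect_less) (auto intro!: continuous_intros)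
  then have "emeasure (gauss_output \<sigma> c1) A
      \<le> exp \<epsilon> * emeasure (gauss_output \<sigma> c2) A + emeasure (gauss_output \<sigma> c1) ?Bad"
    unfolding gauss_output_eq_density using A
    by (intro emeasure_density_le_outside)
       (auto simp: ennreal_mult'[symmetric] intro!: ennreal_leI iso_normal_density_ratio_le[OF \<sigma>])
  also have "\<dots> \<le> exp \<epsilon> * emeasure (gauss_output \<sigma> c2) A + \<delta>"
    by (intro add_left_mono emeasure_gauss_output_privacy_loss_le) (use assms False in auto)
  finally show ?thesis
    using \<delta> by (simp add: P1.emeasure_eq_measure P2.emeasure_eq_measure ennreal_mult'[symmetric]
        ennreal_plus[symmetric] del: ennreal_plus)
qed

lemma indistinguishable_gauss_output:
  fixes c1 c2 :: "'a::euclidean_space"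
  assumes "\<sigma> > 0" "\<epsilon> > 0" "0 < \<delta>" "\<delta> < 1" "norm (c1 - c2) \<le> \<sigma> * b_eps_delta \<epsilon> \<delta>"
  shows "indistinguishable \<epsilon> \<delta> (gauss_output \<sigma> c1) (gauss_output \<sigma> c2)"
  unfolding indistinguishable_def
  using measure_gauss_output_le[OF assms(1-4)] assms(5)
  by (auto simp: gauss_output_def norm_minus_commute)

section \<open>First-order calculus on convex sets\<close>

lemma grad_eqI:
  fixes F :: "'a::real_inner \<Rightarrow> real"
  assumes "GDERIV F w :> D"
  shows "grad F w = D"
  unfolding grad_def
proof (rule the_equality)
  fix D' assume "GDERIV F w :> D'"
  then have "(\<lambda>h. inner h D') = (\<lambda>h. inner h D)"
    using assms unfolding gderiv_def by (rule has_derivative_unique)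
  then have "inner (D' - D) D' = inner (D' - D) D" by metis
  then have "inner (D' - D) (D' - D) = 0" by (simp add: inner_diff_right)
  then show "D' = D" by simp
qed (rule assms)

lemma has_derivative_grad:
  fixes F :: "'a::euclidean_space \<Rightarrow> real"
  assumes "F differentiable (at w)"
  shows "(F has_derivative (\<lambda>h. inner h (grad F w))) (at w)"
proof -
  obtain F' where F': "(F has_derivative F') (at w)"
    using assms unfolding differentiable_def by blast
  interpret F': linear F' using has_derivative_linear[OF F'] .
  define D where "D = (\<Sum>b\<in>Basis. F' b *\<^sub>R b)"
  have "F' h = inner h D" for h
  proof -
    have "F' h = F' (\<Sum>b\<in>Basis. inner h b *\<^sub>R b)" by (simp add: euclidean_representation)
    also have "\<dots> = inner h D"
      unfolding D_def by (simp add: F'.sum F'.scale inner_sum_right mult.commute)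
    finally show ?thesis .
  qed
  then have "F' = (\<lambda>h. inner h D)" by (simp add: fun_eq_iff)
  with F' have "GDERIV F w :> D" unfolding gderiv_def by simp
  then show ?thesis using grad_eqI[of F w D] unfolding gderiv_def by simp
qed

lemma differentiable_emp_loss:
  assumes "\<And>z. (\<lambda>w. f w z) differentiable (at w)"
  shows "emp_loss f S differentiable (at w)"
proof -
  have "(\<lambda>w. \<Sum>z\<leftarrow>S. f w z :: real) differentiable (at w)"
    by (induction S) (simp_all add: assms differentiable_add)
  then have "(\<lambda>w. (\<Sum>z\<leftarrow>S. f w z) * inverse (real (length S))) differentiable (at w)"
    by (rule differentiable_mult[OF _ differentiable_const])
  moreover have "emp_loss f S = (\<lambda>w. (\<Sum>z\<leftarrow>S. f w z) * inverse (real (length S)))"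
    unfolding emp_loss_def divide_inverse ..
  ultimately show ?thesis by simp
qed

lemma emp_loss_snoc:
  assumes "length R = n"
  shows "emp_loss f (R @ [z]) w = (real n * emp_loss f R w + f w z) / (real n + 1)"
  using assms unfolding emp_loss_def by (cases "n = 0") auto

lemma convex_point_on_segment:
  assumes "convex W" "x \<in> W" "y \<in> W" "0 \<le> t" "t \<le> 1"
  shows "x + t *\<^sub>R (y - x) \<in> W"
proof -
  have "(1 - t) *\<^sub>R x + t *\<^sub>R y \<in> W" using convexD_alt[OF assms(1-3)] assms(4,5) by blast
  moreover have "(1 - t) *\<^sub>R x + t *\<^sub>R y = x + t *\<^sub>R (y - x)" by (simp add: algebra_simps)
  ultimately show ?thesis by simp
qed

lemma has_derivative_dir_ge:
  fixes \<phi> :: "'a::real_normed_vector \<Rightarrow> real"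
  assumes \<phi>: "(\<phi> has_derivative \<phi>') (at w)"
    and incr: "\<And>t. 0 < t \<Longrightarrow> t < 1 \<Longrightarrow> c * t \<le> \<phi> (w + t *\<^sub>R v) - \<phi> w"
  shows "c \<le> \<phi>' v"
proof (rule ccontr)
  assume "\<not> c \<le> \<phi>' v"
  interpret \<phi>': linear \<phi>' using has_derivative_linear[OF \<phi>] .
  have "((\<lambda>s. w + s *\<^sub>R v) has_derivative (\<lambda>s. s *\<^sub>R v)) (at 0)"
    by (auto intro!: derivative_eq_intros)
  moreover have "(\<phi> has_derivative \<phi>') (at (w + 0 *\<^sub>R v))" using \<phi> by simp
  ultimately have "((\<lambda>s. \<phi> (w + s *\<^sub>R v)) has_derivative (\<lambda>s. \<phi>' (s *\<^sub>R v))) (at 0)"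
    by (rule has_derivative_compose)
  then have "((\<lambda>s. \<phi> (w + s *\<^sub>R v)) has_real_derivative \<phi>' v) (at 0)"
    unfolding has_field_derivative_def
    by (rule has_derivative_eq_rhs) (simp add: fun_eq_iff \<phi>'.scale mult.commute)
  then have "((\<lambda>s. \<phi> (w + s *\<^sub>R v) - c * s) has_real_derivative \<phi>' v - c) (at 0)"
    by (auto intro!: derivative_eq_intros)
  from DERIV_neg_dec_right[OF this] \<open>\<not> c \<le> \<phi>' v\<close>
  obtain e where e: "e > 0" "\<And>h. 0 < h \<Longrightarrow> h < e \<Longrightarrow> \<phi> (w + h *\<^sub>R v) - c * h < \<phi> w"
    by auto
  define t where "t = min (e / 2) (1 / 2)"
  have "0 < t" "t < e" "t < 1" unfolding t_def using e by auto
  then show False using e(2)[of t] incr[of t] by simp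
qed

lemma minimizer_first_order:
  fixes F :: "'a::real_normed_vector \<Rightarrow> real"
  assumes "convex W" "a \<in> W" "y \<in> W" "\<forall>w\<in>W. F a \<le> F w" "(F has_derivative F') (at a)"
  shows "0 \<le> F' (y - a)"
proof (rule has_derivative_dir_ge[OF assms(5)])
  fix t :: real assume "0 < t" "t < 1"
  then have "a + t *\<^sub>R (y - a) \<in> W" using convex_point_on_segment[OF assms(1-3)] by simp
  then show "0 * t \<le> F (a + t *\<^sub>R (y - a)) - F a" using assms(4) by simp
qed

lemma has_derivative_le_lipschitz:
  fixes f :: "'a::real_normed_vector \<Rightarrow> real"
  assumes "convex W" "a \<in> W" "b \<in> W" and lip: "\<forall>w\<in>W. \<forall>w'\<in>W. \<bar>f w - f w'\<bar> \<le> L * dist w w'"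
    and "(f has_derivative f') (at b)"
  shows "f' (a - b) \<le> L * norm (a - b)"
proof -
  have "((\<lambda>w. - f w) has_derivative (\<lambda>h. - f' h)) (at b)"
    using assms(5) by (rule has_derivative_minus)
  then have "- L * norm (a - b) \<le> - f' (a - b)"
  proof (rule has_derivative_dir_ge)
    fix t :: real assume t: "0 < t" "t < 1"
    then have "b + t *\<^sub>R (a - b) \<in> W" using convex_point_on_segment[OF assms(1,3,2)] by simp
    then have "\<bar>f (b + t *\<^sub>R (a - b)) - f b\<bar> \<le> L * (t * norm (a - b))"
      using lip assms(3) t by (force simp: dist_norm)
    then show "- L * norm (a - b) * t \<le> - f (b + t *\<^sub>R (a - b)) - - f b"
      by (simp add: abs_le_iff algebra_simps)
  qed
  then show ?thesis by simp
qed

lemma descent_lemma: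
  fixes F :: "'a::real_inner \<Rightarrow> real"
  assumes "convex W" "x \<in> W" "y \<in> W"
    and der: "\<And>w. w \<in> W \<Longrightarrow> (F has_derivative (\<lambda>h. inner h (g w))) (at w)"
    and smooth: "\<And>w w'. w \<in> W \<Longrightarrow> w' \<in> W \<Longrightarrow> norm (g w - g w') \<le> bet * norm (w - w')"
  shows "F y - F x - inner (g x) (y - x) \<le> bet / 2 * (norm (y - x))\<^sup>2"
proof -
  define v where "v = y - x"
  define \<psi> where "\<psi> t = F (x + t *\<^sub>R v) - t * inner v (g x) - bet / 2 * t\<^sup>2 * (norm v)\<^sup>2" for t
  have "\<psi> 1 \<le> \<psi> 0"
  proof (rule DERIV_nonpos_imp_nonincreasing[of 0 1 \<psi>])
    fix t :: real assume t: "0 \<le> t" "t \<le> 1"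
    define p where "p = x + t *\<^sub>R v"
    have p: "p \<in> W" unfolding p_def v_def using convex_point_on_segment[OF assms(1-3) t] .
    have "((\<lambda>s. x + s *\<^sub>R v) has_derivative (\<lambda>s. s *\<^sub>R v)) (at t)"
      by (auto intro!: derivative_eq_intros)
    then have "((\<lambda>s. F (x + s *\<^sub>R v)) has_derivative (\<lambda>s. inner (s *\<^sub>R v) (g p))) (at t)"
      using der[OF p] unfolding p_def by (rule has_derivative_compose)
    then have dF: "((\<lambda>s. F (x + s *\<^sub>R v)) has_real_derivative inner v (g p)) (at t)"
      unfolding has_field_derivative_def
      by (rule has_derivative_eq_rhs) (simp add: fun_eq_iff mult.commute)
    have D: "(\<psi> has_real_derivative inner v (g p) - inner v (g x) - bet / 2 * (2 * t) * (norm v)\<^sup>2) (at t)"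
      unfolding \<psi>_def by (rule derivative_eq_intros dF | simp)+
    have "inner v (g p) - inner v (g x) \<le> norm v * norm (g p - g x)"
      by (metis inner_diff_right norm_cauchy_schwarz)
    also have "\<dots> \<le> norm v * (bet * (t * norm v))"
      using smooth[OF p assms(2)] t by (intro mult_left_mono) (auto simp: p_def)
    finally have "inner v (g p) - inner v (g x) - bet / 2 * (2 * t) * (norm v)\<^sup>2 \<le> 0"
      by (simp add: power2_eq_square algebra_simps)
    with D show "\<exists>y. (\<psi> has_real_derivative y) (at t) \<and> y \<le> 0" by blast
  qed simp
  then show ?thesis unfolding \<psi>_def v_def by (simp add: inner_commute)
qed

section \<open>Contraction of projected gradient descent\<close>

lemma closest_point_eqI:
  fixes S :: "'a::euclidean_space set"
  assumes "convex S" "closed S" "c \<in> S" and obtuse: "\<And>z. z \<in> S \<Longrightarrow> inner (u - c) (z - c) \<le> 0"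
  shows "closest_point S u = c"
proof -
  have "dist u c \<le> dist u z" if z: "z \<in> S" for z
  proof -
    have "(norm (u - z))\<^sup>2 = (norm (u - c))\<^sup>2 - 2 * inner (u - c) (z - c) + (norm (z - c))\<^sup>2"
      unfolding power2_norm_eq_inner by (simp add: inner_diff inner_commute algebra_simps)
    then have "(norm (u - c))\<^sup>2 \<le> (norm (u - z))\<^sup>2"
      using obtuse[OF z] zero_le_power2[of "norm (z - c)"] by linarith
    then show ?thesis by (simp add: dist_norm)
  qed
  then show ?thesis using closest_point_unique[OF assms(1-3)] by simp
qed

lemma closest_point_eq_if_orthogonal:
  fixes S :: "'a::euclidean_space set"
  assumes "convex S" "closed S" "S \<noteq> {}"
    and orth: "\<And>z z'. z \<in> S \<Longrightarrow> z' \<in> S \<Longrightarrow> inner (u - u') (z - z') = 0"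
  shows "closest_point S u = closest_point S u'"
proof (rule closest_point_eqI[OF assms(1,2)])
  show c: "closest_point S u' \<in> S" using closest_point_in_set[OF assms(2,3)] .
  fix z assume z: "z \<in> S"
  have "inner (u - closest_point S u') (z - closest_point S u')
      = inner (u' - closest_point S u') (z - closest_point S u') + inner (u - u') (z - closest_point S u')"
    by (simp add: inner_diff_left)
  also have "\<dots> \<le> 0"
    using closest_point_dot[OF assms(1,2) z] orth[OF z c] by simp
  finally show "inner (u - closest_point S u') (z - closest_point S u') \<le> 0" .
qed

lemma ball_affine_hull_subset_closed_segment:
  fixes S :: "'a::real_normed_vector set"
  assumes "convex S" "x \<in> S" "y \<in> S"
    and balls: "ball x r \<inter> affine hull S \<subseteq> S" "ball y r \<inter> affine hull S \<subseteq> S"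
    and p: "p \<in> closed_segment x y"
  shows "ball p r \<inter> affine hull S \<subseteq> S"
proof
  fix z assume z: "z \<in> ball p r \<inter> affine hull S"
  obtain u where u: "0 \<le> u" "u \<le> 1" "p = (1 - u) *\<^sub>R x + u *\<^sub>R y"
    using p by (auto simp: in_segment)
  have "p \<in> S" using p closed_segment_subset[OF assms(2,3,1)] by blast
  have shifted: "w + (z - p) \<in> S" if "w \<in> S" "ball w r \<inter> affine hull S \<subseteq> S" for w
  proof -
    have "w + 1 *\<^sub>R (z - p) \<in> affine hull S"
      by (rule mem_affine_3_minus[OF affine_affine_hull])
         (use z \<open>p \<in> S\<close> that(1) in \<open>auto intro: hull_inc\<close>)
    moreover have "dist w (w + (z - p)) = dist p z"
      by (simp add: dist_norm algebra_simps)
    then have "w + (z - p) \<in> ball w r" using z by simp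
    ultimately show ?thesis using that(2) by auto
  qed
  have "(1 - u) *\<^sub>R (x + (z - p)) + u *\<^sub>R (y + (z - p)) \<in> S"
    using convexD_alt[OF assms(1) shifted[OF assms(2) balls(1)] shifted[OF assms(3) balls(2)]] u by blast
  moreover have "(1 - u) *\<^sub>R (x + (z - p)) + u *\<^sub>R (y + (z - p)) = ((1 - u) *\<^sub>R x + u *\<^sub>R y) + (z - p)"
    by (simp add: algebra_simps)
  ultimately show "z \<in> S" using u(3) by simp
qed

lemma lipschitz_on_closed_segment_if_local:
  fixes G :: "'a::real_normed_vector \<Rightarrow> 'b::metric_space"
  assumes cont: "continuous_on (closed_segment x y) G" and "r > 0" "C \<ge> 0"
    and local: "\<And>p p'. p \<in> closed_segment x y \<Longrightarrow> p' \<in> closed_segment x y \<Longrightarrow> dist p p' < r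
                  \<Longrightarrow> dist (G p) (G p') \<le> C * dist p p'"
  shows "dist (G x) (G y) \<le> C * dist x y"
proof -
  define \<gamma> where "\<gamma> t = (1 - t) *\<^sub>R x + t *\<^sub>R y" for t
  have \<gamma>_in: "\<gamma> t \<in> closed_segment x y" if "t \<in> {0..1}" for t
    using that unfolding \<gamma>_def in_segment by auto
  have dist_\<gamma>: "dist (\<gamma> s) (\<gamma> t) = \<bar>s - t\<bar> * dist x y" for s t
  proof -
    have "\<gamma> s - \<gamma> t = (s - t) *\<^sub>R (y - x)" unfolding \<gamma>_def by (simp add: algebra_simps)
    then show ?thesis by (simp add: dist_norm norm_minus_commute)
  qed
  define d where "d = r / (dist x y + 1)"
  have d: "d > 0" "d * dist x y < r"
    using \<open>r > 0\<close> unfolding d_def by (simp_all add: add_nonneg_pos pos_divide_less_eq distrib_left)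
  have "(C * dist x y)-lipschitz_on {0..1} (G \<circ> \<gamma>)"
  proof (rule locally_lipschitz_imp_lipschitz)
    have "continuous_on {0..1} \<gamma>" unfolding \<gamma>_def by (intro continuous_intros)
    then show "continuous_on {0..1} (G \<circ> \<gamma>)"
      using \<gamma>_in by (intro continuous_on_compose continuous_on_subset[OF cont]) auto
    fix s t :: real assume s: "s \<in> {0..<1}" and "t > s"
    define z where "z = min (min t 1) (s + d / 2)"
    have z: "z \<in> {s<..t}" "z \<in> {0..1}" "z - s < d"
      using s \<open>t > s\<close> d unfolding z_def by auto
    have dz: "dist (\<gamma> z) (\<gamma> s) = (z - s) * dist x y" using z(1) dist_\<gamma>[of z s] by simp
    also have "\<dots> \<le> d * dist x y" using z(3) by (intro mult_right_mono) auto
    finally have "dist (\<gamma> z) (\<gamma> s) < r" using d(2) by linarith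
    moreover have "s \<in> {0..1}" using s by simp
    ultimately have "dist (G (\<gamma> z)) (G (\<gamma> s)) \<le> C * ((z - s) * dist x y)"
      using local[OF \<gamma>_in[OF z(2)] \<gamma>_in] dz by metis
    then show "\<exists>z\<in>{s<..t}. dist ((G \<circ> \<gamma>) z) ((G \<circ> \<gamma>) s) \<le> C * dist x y * (z - s)"
      using z(1) by (auto simp: algebra_simps)
  qed (use \<open>C \<ge> 0\<close> in simp)
  from lipschitz_onD[OF this, of 0 1] show ?thesis by (simp add: \<gamma>_def)
qed

text \<open>The four Bregman inequalities are evaluated at the two gradient-step points; in their sum
  the values of \<open>h\<close> cancel.\<close>
lemma cocoercive_if_bregman_bounds:
  fixes h :: "'a::real_inner \<Rightarrow> real" and q :: "'a \<Rightarrow> 'a"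
  assumes M: "M > 0"
    and lower: "\<And>u v. u \<in> S \<Longrightarrow> v \<in> S \<Longrightarrow> 0 \<le> h v - h u - inner (q u) (v - u)"
    and upper: "\<And>u v. u \<in> S \<Longrightarrow> v \<in> S \<Longrightarrow> h v - h u - inner (q u) (v - u) \<le> M / 2 * (norm (v - u))\<^sup>2"
    and x: "x \<in> S" and y: "y \<in> S"
    and p1: "x - (1 / M) *\<^sub>R (q x - q y) \<in> S" and p2: "y + (1 / M) *\<^sub>R (q x - q y) \<in> S"
  shows "(norm (q x - q y))\<^sup>2 / M \<le> inner (q x - q y) (x - y)"
proof -
  define e where "e = q x - q y"
  define p1 p2 where "p1 = x - (1 / M) *\<^sub>R e" and "p2 = y + (1 / M) *\<^sub>R e"
  have p12: "p1 \<in> S" "p2 \<in> S" using p1 p2 unfolding p1_def p2_def e_def .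
  have "M / 2 * (norm (p1 - x))\<^sup>2 = (norm e)\<^sup>2 / M / 2" "M / 2 * (norm (p2 - y))\<^sup>2 = (norm e)\<^sup>2 / M / 2"
    unfolding p1_def p2_def using M by (simp_all add: power2_eq_square field_simps)
  then have "0 \<le> h p1 - h y - inner (q y) (p1 - y)"
    "h p1 - h x - inner (q x) (p1 - x) \<le> (norm e)\<^sup>2 / M / 2"
    "0 \<le> h p2 - h x - inner (q x) (p2 - x)"
    "h p2 - h y - inner (q y) (p2 - y) \<le> (norm e)\<^sup>2 / M / 2"
    using lower[OF y p12(1)] upper[OF x p12(1)] lower[OF x p12(2)] upper[OF y p12(2)] by auto
  moreover have "inner (q y) (p1 - y) = inner (q y) (x - y) - inner (q y) e / M"
    "inner (q x) (p1 - x) = - inner (q x) e / M"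
    "inner (q x) (p2 - x) = - inner (q x) (x - y) + inner (q x) e / M"
    "inner (q y) (p2 - y) = inner (q y) e / M"
    unfolding p1_def p2_def by (simp_all add: inner_diff_right algebra_simps)
  moreover have "inner (q x) e / M - inner (q y) e / M = (norm e)\<^sup>2 / M"
    unfolding e_def by (simp add: power2_norm_eq_inner inner_diff diff_divide_distrib[symmetric])
  ultimately have "(norm e)\<^sup>2 / M \<le> inner (q x) (x - y) - inner (q y) (x - y)"
    by linarith
  then show ?thesis unfolding e_def by (simp add: inner_diff_left)
qed

lemma norm_gradient_step_le_if_cocoercive:
  fixes u d :: "'a::real_inner"
  assumes lam: "0 < lam" "lam < bet"
    and cocoercive: "(norm (u - lam *\<^sub>R d))\<^sup>2 / (bet - lam) \<le> inner (u - lam *\<^sub>R d) d"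
  shows "norm (d - (2 / (lam + bet)) *\<^sub>R u) \<le> (bet - lam) / (bet + lam) * norm d"
proof -
  define A B C where "A = inner u d" and "B = (norm u)\<^sup>2" and "C = (norm d)\<^sup>2"
  have "(norm (u - lam *\<^sub>R d))\<^sup>2 = B - 2 * lam * A + lam\<^sup>2 * C"
    unfolding A_def B_def C_def power2_norm_eq_inner
    by (simp add: inner_diff inner_commute power2_eq_square algebra_simps)
  moreover have "inner (u - lam *\<^sub>R d) d = A - lam * C"
    unfolding A_def C_def by (simp add: inner_diff_left power2_norm_eq_inner)
  ultimately have "B - 2 * lam * A + lam\<^sup>2 * C \<le> (bet - lam) * (A - lam * C)"
    using cocoercive lam by (simp add: pos_divide_le_eq mult.commute)
  then have key: "B \<le> (lam + bet) * A - lam * bet * C" by (simp add: power2_eq_square algebra_simps)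
  have "(norm (d - (2 / (lam + bet)) *\<^sub>R u))\<^sup>2 = C - 2 * (2 / (lam + bet)) * A + (2 / (lam + bet))\<^sup>2 * B"
    unfolding A_def B_def C_def power2_norm_eq_inner
    by (simp add: inner_diff inner_commute power2_eq_square algebra_simps)
  also have "\<dots> \<le> C - 2 * (2 / (lam + bet)) * A + (2 / (lam + bet))\<^sup>2 * ((lam + bet) * A - lam * bet * C)"
    using key by (intro add_left_mono mult_left_mono) auto
  also have "\<dots> = ((bet - lam) / (bet + lam))\<^sup>2 * C"
  proof -
    define s where "s = lam + bet"
    have s: "s \<noteq> 0" "bet + lam = s" unfolding s_def using lam by auto
    have step: "(2 / s)\<^sup>2 * (s * A - lam * bet * C) = 2 * (2 / s) * A - 4 * lam * bet / s\<^sup>2 * C"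
      using s by (simp add: power2_eq_square field_simps)
    have "(bet - lam)\<^sup>2 = s\<^sup>2 - 4 * lam * bet"
      unfolding s_def by (simp add: power2_eq_square algebra_simps)
    then have "((bet - lam) / s)\<^sup>2 = (s\<^sup>2 - 4 * lam * bet) / s\<^sup>2"
      by (simp only: power_divide)
    also have "\<dots> = 1 - 4 * lam * bet / s\<^sup>2" using s by (simp add: diff_divide_distrib)
    finally have gam: "((bet - lam) / s)\<^sup>2 = 1 - 4 * lam * bet / s\<^sup>2" .
    show ?thesis unfolding s_def[symmetric] s(2) step gam by (simp add: algebra_simps)
  qed
  also have "\<dots> = ((bet - lam) / (bet + lam) * norm d)\<^sup>2"
    unfolding C_def by (rule power_mult_distrib[symmetric])
  finally show ?thesis
    by (rule power2_le_imp_le) (use lam in simp)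
qed

locale constrained_strongly_convex =
  fixes W :: "'a::euclidean_space set" and F :: "'a \<Rightarrow> real" and lam bet :: real and a :: 'a
  assumes closed_W: "closed W" and convex_W: "convex W"
    and differentiable_F: "\<And>w. w \<in> W \<Longrightarrow> F differentiable (at w)"
    and strongly_convex: "strongly_convex_on W lam F"
    and smooth: "smooth_on W bet F"
    and lam_pos: "0 < lam" and lam_less_bet: "lam < bet"
    and a_in_W: "a \<in> W" and a_minimal: "\<And>w. w \<in> W \<Longrightarrow> F a \<le> F w"
begin

lemma has_derivative_F: "w \<in> W \<Longrightarrow> (F has_derivative (\<lambda>h. inner h (grad F w))) (at w)"
  by (rule has_derivative_grad[OF differentiable_F])

lemma grad_minimizer: "y \<in> W \<Longrightarrow> 0 \<le> inner (grad F a) (y - a)"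
  using minimizer_first_order[OF convex_W a_in_W _ _ has_derivative_F[OF a_in_W]] a_minimal
  by (simp add: inner_commute)

definition parallel_subspace :: "'a set" where
  "parallel_subspace = (\<lambda>x. x - a) ` (affine hull W)"

lemma subspace_parallel_subspace: "subspace parallel_subspace"
  unfolding parallel_subspace_def
  by (rule affine_diffs_subspace_subtract[OF affine_affine_hull hull_inc[OF a_in_W]])

lemma diff_in_parallel_subspace:
  assumes "x \<in> W" "y \<in> W"
  shows "y - x \<in> parallel_subspace"
proof -
  have "y + 1 *\<^sub>R (a - x) \<in> affine hull W"
    by (rule mem_affine_3_minus[OF affine_affine_hull]) (use assms a_in_W in \<open>auto intro: hull_inc\<close>)
  then show ?thesis unfolding parallel_subspace_def by (auto intro: image_eqI[where x = "y + (a - x)"])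
qed

text \<open>Only the component of the gradient parallel to \<open>affine hull W\<close> affects the projected
  gradient step, and only this component is controlled by the behaviour of \<open>F\<close> on \<open>W\<close>.\<close>
definition tangent_grad :: "'a \<Rightarrow> 'a" where
  "tangent_grad w =
     (SOME t. t \<in> parallel_subspace \<and> (\<forall>v\<in>parallel_subspace. inner (grad F w - t) v = 0))"

lemma
  shows tangent_grad_in_parallel_subspace: "tangent_grad w \<in> parallel_subspace"
    and inner_tangent_grad: "v \<in> parallel_subspace \<Longrightarrow> inner (tangent_grad w) v = inner (grad F w) v"
proof -
  obtain t n where "t \<in> span parallel_subspace" "\<And>v. v \<in> span parallel_subspace \<Longrightarrow> orthogonal n v"
    "grad F w = t + n"
    using orthogonal_subspace_decomp_exists by metis
  then have "\<exists>t. t \<in> parallel_subspace \<and> (\<forall>v\<in>parallel_subspace. inner (grad F w - t) v = 0)"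
    using span_eq_iff[THEN iffD2, OF subspace_parallel_subspace] by (auto simp: orthogonal_def)
  from someI_ex[OF this]
  have "tangent_grad w \<in> parallel_subspace \<and> (\<forall>v\<in>parallel_subspace. inner (grad F w - tangent_grad w) v = 0)"
    unfolding tangent_grad_def .
  then show "tangent_grad w \<in> parallel_subspace"
    "v \<in> parallel_subspace \<Longrightarrow> inner (tangent_grad w) v = inner (grad F w) v"
    by (auto simp: inner_diff_left)
qed

lemma lipschitz_tangent_grad: "bet-lipschitz_on W tangent_grad"
proof (rule lipschitz_onI)
  fix x y assume xy: "x \<in> W" "y \<in> W"
  define d where "d = tangent_grad x - tangent_grad y"
  have "d \<in> parallel_subspace"
    unfolding d_def using subspace_diff[OF subspace_parallel_subspace] tangent_grad_in_parallel_subspace by blast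
  then have "(norm d)\<^sup>2 = inner (grad F x - grad F y) d"
    unfolding d_def power2_norm_eq_inner by (simp add: inner_diff_left inner_tangent_grad)
  also have "\<dots> \<le> norm (grad F x - grad F y) * norm d" by (rule norm_cauchy_schwarz)
  finally have "norm d \<le> norm (grad F x - grad F y)"
    by (cases "norm d = 0") (auto simp: power2_eq_square)
  also have "\<dots> \<le> bet * norm (x - y)" using smooth xy unfolding smooth_on_def by blast
  finally show "dist (tangent_grad x) (tangent_grad y) \<le> bet * dist x y"
    by (simp add: d_def dist_norm)
qed (use lam_pos lam_less_bet in simp)

definition step :: "'a \<Rightarrow> 'a" where
  "step x = x - (2 / (lam + bet)) *\<^sub>R tangent_grad x"

lemma closest_point_grad_step:
  assumes "x \<in> W"
  shows "closest_point W (x - \<eta> *\<^sub>R grad F x) = closest_point W (x - \<eta> *\<^sub>R tangent_grad x)"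
proof (rule closest_point_eq_if_orthogonal[OF convex_W closed_W])
  show "W \<noteq> {}" using assms by blast
  fix z z' assume "z \<in> W" "z' \<in> W"
  then have "inner (tangent_grad x) (z - z') = inner (grad F x) (z - z')"
    using inner_tangent_grad diff_in_parallel_subspace by blast
  then show "inner (x - \<eta> *\<^sub>R grad F x - (x - \<eta> *\<^sub>R tangent_grad x)) (z - z') = 0"
    by (simp add: inner_diff_left)
qed

lemma closest_point_step_minimizer: "closest_point W (step a) = a"
proof (rule closest_point_eqI[OF convex_W closed_W a_in_W])
  fix z assume "z \<in> W"
  then have "0 \<le> inner (tangent_grad a) (z - a)"
    using grad_minimizer inner_tangent_grad diff_in_parallel_subspace a_in_W by metis
  moreover have "2 / (lam + bet) \<ge> 0" using lam_pos lam_less_bet by simp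
  ultimately show "inner (step a - a) (z - a) \<le> 0"
    unfolding step_def by simp
qed

lemma bregman_bounds:
  assumes u: "u \<in> W" and v: "v \<in> W"
  defines "D \<equiv> (F v - lam / 2 * (norm v)\<^sup>2) - (F u - lam / 2 * (norm u)\<^sup>2)
                 - inner (tangent_grad u - lam *\<^sub>R u) (v - u)"
  shows "0 \<le> D" and "D \<le> (bet - lam) / 2 * (norm (v - u))\<^sup>2"
proof -
  have "inner (tangent_grad u) (v - u) = inner (grad F u) (v - u)"
    using inner_tangent_grad diff_in_parallel_subspace[OF u v] .
  then have "D = F v - F u - inner (grad F u) (v - u)
                 - lam / 2 * ((norm v)\<^sup>2 - (norm u)\<^sup>2 - 2 * inner u (v - u))"
    unfolding D_def by (simp add: inner_diff_left algebra_simps)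
  also have "(norm v)\<^sup>2 - (norm u)\<^sup>2 - 2 * inner u (v - u) = (norm (v - u))\<^sup>2"
    unfolding power2_norm_eq_inner by (simp add: inner_diff inner_commute)
  finally have D: "D = F v - F u - inner (grad F u) (v - u) - lam / 2 * (norm (v - u))\<^sup>2" .
  show "0 \<le> D" using strongly_convex u v unfolding D strongly_convex_on_def by fastforce
  have "F v - F u - inner (grad F u) (v - u) \<le> bet / 2 * (norm (v - u))\<^sup>2"
    using smooth unfolding smooth_on_def
    by (intro descent_lemma[OF convex_W u v has_derivative_F]) auto
  then show "D \<le> (bet - lam) / 2 * (norm (v - u))\<^sup>2" unfolding D by (simp add: algebra_simps)
qed

lemma add_parallel_in_W:
  assumes p: "p \<in> W" "ball p r \<inter> affine hull W \<subseteq> W" and v: "v \<in> parallel_subspace" "norm v < r"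
  shows "p + v \<in> W"
proof -
  obtain w where w: "w \<in> affine hull W" "v = w - a" using v(1) unfolding parallel_subspace_def by blast
  have "p + 1 *\<^sub>R (w - a) \<in> affine hull W"
    by (rule mem_affine_3_minus[OF affine_affine_hull]) (use w(1) p(1) a_in_W in \<open>auto intro: hull_inc\<close>)
  moreover have "p + v \<in> ball p r" using v(2) by (simp add: dist_norm)
  ultimately show ?thesis using p(2) w(2) by auto
qed

text \<open>The cocoercivity argument needs the gradient-step points
  \<open>x \<mp> (1 / (bet - lam)) *\<^sub>R (q x - q y)\<close> to lie in \<open>W\<close>, which is guaranteed when \<open>x\<close> and \<open>y\<close>
  are close compared to the radii of relative balls around them.\<close>
lemma step_contraction_local:
  assumes x: "x \<in> W" and y: "y \<in> W"
    and balls: "ball x r \<inter> affine hull W \<subseteq> W" "ball y r \<inter> affine hull W \<subseteq> W"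
    and close: "(bet + lam) / (bet - lam) * dist x y < r"
  shows "dist (step x) (step y) \<le> (bet - lam) / (bet + lam) * dist x y"
proof -
  define q where "q u = tangent_grad u - lam *\<^sub>R u" for u
  define e where "e = (1 / (bet - lam)) *\<^sub>R (q x - q y)"
  have M: "bet - lam > 0" using lam_less_bet by simp
  have q: "q x - q y = (tangent_grad x - tangent_grad y) - lam *\<^sub>R (x - y)"
    unfolding q_def by (simp add: algebra_simps)
  have "q x - q y \<in> parallel_subspace"
    unfolding q using subspace_parallel_subspace tangent_grad_in_parallel_subspace diff_in_parallel_subspace[OF y x]
    by (simp add: subspace_diff subspace_scale)
  then have e: "e \<in> parallel_subspace"
    unfolding e_def by (rule subspace_scale[OF subspace_parallel_subspace])
  have "norm (q x - q y) \<le> norm (tangent_grad x - tangent_grad y) + norm (lam *\<^sub>R (x - y))"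
    unfolding q by (rule norm_triangle_ineq4)
  also have "\<dots> \<le> (bet + lam) * dist x y"
    using lipschitz_onD[OF lipschitz_tangent_grad x y] lam_pos by (simp add: dist_norm distrib_right)
  finally have "norm e \<le> (bet + lam) / (bet - lam) * dist x y"
    using M unfolding e_def by (simp add: divide_right_mono)
  then have "norm e < r" using close by linarith
  have "(norm (q x - q y))\<^sup>2 / (bet - lam) \<le> inner (q x - q y) (x - y)"
  proof (rule cocoercive_if_bregman_bounds[where h = "\<lambda>u. F u - lam / 2 * (norm u)\<^sup>2", OF M _ _ x y])
    show "x - (1 / (bet - lam)) *\<^sub>R (q x - q y) \<in> W"
      using add_parallel_in_W[OF x balls(1), of "- e"] e \<open>norm e < r\<close>
      by (simp add: e_def subspace_neg[OF subspace_parallel_subspace])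
    show "y + (1 / (bet - lam)) *\<^sub>R (q x - q y) \<in> W"
      using add_parallel_in_W[OF y balls(2) e] \<open>norm e < r\<close> by (simp add: e_def)
  qed (unfold q_def, (rule bregman_bounds; assumption)+)
  then have "norm (x - y - (2 / (lam + bet)) *\<^sub>R (tangent_grad x - tangent_grad y))
      \<le> (bet - lam) / (bet + lam) * norm (x - y)"
    by (intro norm_gradient_step_le_if_cocoercive lam_pos lam_less_bet)
       (simp add: q_def algebra_simps)
  then show ?thesis unfolding step_def dist_norm by (simp add: algebra_simps)
qed

lemma continuous_on_step: "continuous_on W step"
  unfolding step_def[abs_def]
  by (intro continuous_intros lipschitz_on_continuous_on[OF lipschitz_tangent_grad])

lemma lipschitz_step_rel_interior: "((bet - lam) / (bet + lam))-lipschitz_on (rel_interior W) step"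
proof (rule lipschitz_onI)
  fix x y assume x: "x \<in> rel_interior W" and y: "y \<in> rel_interior W"
  obtain r1 r2 where r: "r1 > 0" "ball x r1 \<inter> affine hull W \<subseteq> W" "r2 > 0" "ball y r2 \<inter> affine hull W \<subseteq> W"
    using x y unfolding mem_rel_interior_ball by blast
  define r where "r = min r1 r2"
  have xy: "x \<in> W" "y \<in> W" using x y rel_interior_subset by blast+
  have balls: "ball x r \<inter> affine hull W \<subseteq> W" "ball y r \<inter> affine hull W \<subseteq> W"
    using r unfolding r_def by auto
  have segment: "closed_segment x y \<subseteq> W" using closed_segment_subset[OF xy convex_W] .
  define K where "K = (bet + lam) / (bet - lam)"
  have K: "K > 0" unfolding K_def using lam_pos lam_less_bet by simp
  show "dist (step x) (step y) \<le> (bet - lam) / (bet + lam) * dist x y"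
  proof (rule lipschitz_on_closed_segment_if_local[where r = "r / K"])
    show "continuous_on (closed_segment x y) step"
      using continuous_on_subset[OF continuous_on_step segment] .
    show "r / K > 0" "(bet - lam) / (bet + lam) \<ge> 0"
      using K r lam_pos lam_less_bet unfolding r_def by auto
    fix p p' assume p: "p \<in> closed_segment x y" "p' \<in> closed_segment x y" and "dist p p' < r / K"
    then have "K * dist p p' < r" using K by (simp add: pos_less_divide_eq mult.commute)
    then show "dist (step p) (step p') \<le> (bet - lam) / (bet + lam) * dist p p'"
      using p segment ball_affine_hull_subset_closed_segment[OF convex_W xy balls]
      by (intro step_contraction_local) (auto simp: K_def)
  qed
qed (use lam_pos lam_less_bet in simp)

lemma lipschitz_step: "((bet - lam) / (bet + lam))-lipschitz_on W step"
proof -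
  have "closure (rel_interior W) = W"
    using convex_closure_rel_interior[OF convex_W] closure_closed[OF closed_W] by simp
  then show ?thesis
    using lipschitz_on_closure[OF lipschitz_step_rel_interior] continuous_on_step by simp
qed

lemma dist_projected_grad_step_minimizer:
  assumes "x \<in> W"
  shows "dist (closest_point W (x - (2 / (lam + bet)) *\<^sub>R grad F x)) a \<le> (bet - lam) / (bet + lam) * dist x a"
proof -
  have "dist (closest_point W (x - (2 / (lam + bet)) *\<^sub>R grad F x)) a
      = dist (closest_point W (step x)) (closest_point W (step a))"
    unfolding closest_point_grad_step[OF assms] closest_point_step_minimizer by (simp add: step_def)
  also have "\<dots> \<le> dist (step x) (step a)"
    using closest_point_lipschitz[OF convex_W closed_W] a_in_W by blast
  also have "\<dots> \<le> (bet - lam) / (bet + lam) * dist x a"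
    using lipschitz_onD[OF lipschitz_step assms a_in_W] .
  finally show ?thesis .
qed

lemma proj_gd_in_W: "w0 \<in> W \<Longrightarrow> proj_gd W g \<eta> w0 t \<in> W"
  using closest_point_in_set[OF closed_W] by (cases t) (auto simp: proj_gd_def)

lemma dist_proj_gd_minimizer:
  assumes "w0 \<in> W"
  shows "dist (proj_gd W (grad F) (2 / (lam + bet)) w0 t) a \<le> ((bet - lam) / (bet + lam)) ^ t * dist w0 a"
proof (induction t)
  case (Suc t)
  have "dist (proj_gd W (grad F) (2 / (lam + bet)) w0 (Suc t)) a
      \<le> (bet - lam) / (bet + lam) * dist (proj_gd W (grad F) (2 / (lam + bet)) w0 t) a"
    using dist_projected_grad_step_minimizer[OF proj_gd_in_W[OF assms]] by (simp add: proj_gd_def)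
  also have "\<dots> \<le> (bet - lam) / (bet + lam) * (((bet - lam) / (bet + lam)) ^ t * dist w0 a)"
    using Suc lam_pos lam_less_bet by (intro mult_left_mono) auto
  finally show ?case by simp
qed (simp add: proj_gd_def)

end

section \<open>Unlearning guarantee\<close>

lemma emp_loss_minimizers_sensitivity:
  fixes f :: "'a::euclidean_space \<Rightarrow> 'z \<Rightarrow> real"
  assumes W: "convex W"
    and diff: "\<forall>z. \<forall>w\<in>W. (\<lambda>w. f w z) differentiable (at w)"
    and lip: "\<forall>z. \<forall>w\<in>W. \<forall>w'\<in>W. \<bar>f w z - f w' z\<bar> \<le> L * dist w w'"
    and n: "length R = n"
    and sc: "strongly_convex_on W lam (emp_loss f R)"
    and a: "a \<in> W" "\<forall>w\<in>W. emp_loss f R a \<le> emp_loss f R w"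
    and b: "b \<in> W" "\<forall>w\<in>W. emp_loss f (R @ [z]) b \<le> emp_loss f (R @ [z]) w"
  shows "real n * lam * (dist b a)\<^sup>2 \<le> L * dist b a"
proof -
  define F where "F = emp_loss f R"
  have dF: "(F has_derivative (\<lambda>h. inner h (grad F w))) (at w)" if "w \<in> W" for w
    unfolding F_def using diff that by (intro has_derivative_grad differentiable_emp_loss) auto
  obtain f' where f': "((\<lambda>w. f w z) has_derivative f') (at b)"
    using diff b(1) unfolding differentiable_def by blast
  have "0 \<le> inner (b - a) (grad F a)"
    using minimizer_first_order[OF W a(1) b(1) _ dF[OF a(1)]] a(2) by (simp add: F_def)
  moreover have "inner (grad F a) (b - a) + lam / 2 * (dist b a)\<^sup>2 \<le> F b - F a"
    "inner (grad F b) (a - b) + lam / 2 * (dist b a)\<^sup>2 \<le> F a - F b"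
    using sc a(1) b(1) unfolding strongly_convex_on_def F_def
    by (auto simp: dist_norm norm_minus_commute)
  ultimately have "lam * (dist b a)\<^sup>2 \<le> - inner (a - b) (grad F b)"
    by (simp add: inner_commute)
  then have "real n * (lam * (dist b a)\<^sup>2) \<le> - (real n * inner (a - b) (grad F b))"
    using mult_left_mono[of _ _ "real n"] by fastforce
  moreover have "0 \<le> real n * inner (a - b) (grad F b) + f' (a - b)"
  proof -
    have "(emp_loss f (R @ [z]) has_derivative
        (\<lambda>h. (real n * inner h (grad F b) + f' h) / (real n + 1))) (at b)"
      unfolding emp_loss_snoc[OF n, abs_def] F_def[symmetric]
      by (auto intro!: derivative_eq_intros dF[OF b(1)] f')
    from minimizer_first_order[OF W b(1) a(1) _ this] b(2)
    show ?thesis by (simp add: zero_le_divide_iff add_pos_nonneg)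
  qed
  moreover have "f' (a - b) \<le> L * dist b a"
    using has_derivative_le_lipschitz[OF W a(1) b(1) _ f'] lip
    by (simp add: dist_norm norm_minus_commute)
  ultimately show ?thesis by (simp add: power2_eq_square algebra_simps)
qed

lemma I_R_sufficient:
  assumes lam: "0 < lam" "lam < bet" and n: "0 < n" and \<sigma>: "\<sigma> > 0" and b: "b_eps_delta \<epsilon> \<delta> > 0"
    and d: "d \<ge> 0" "real n * lam * d\<^sup>2 \<le> L * d"
    and I: "I_R L n lam bet \<epsilon> \<delta> \<sigma> \<le> int I"
  shows "((bet - lam) / (bet + lam)) ^ I * d \<le> \<sigma> * b_eps_delta \<epsilon> \<delta>"
proof (cases "d = 0")
  case True
  then show ?thesis using \<sigma> b by simp
next
  case False
  define \<gamma> where "\<gamma> = (bet - lam) / (bet + lam)"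
  define s where "s = \<sigma> * b_eps_delta \<epsilon> \<delta>"
  define X where "X = L / (real n * lam * \<sigma> * b_eps_delta \<epsilon> \<delta>)"
  have \<gamma>: "0 < \<gamma>" "\<gamma> < 1" unfolding \<gamma>_def using lam by auto
  have pos: "real n * lam > 0" "s > 0" "d > 0"
    unfolding s_def using lam(1) n \<sigma> b d(1) False by simp_all
  have "(real n * lam * d) * d \<le> L * d" using d(2) by (simp add: power2_eq_square mult.assoc)
  then have dL: "real n * lam * d \<le> L" using pos(3) by (rule mult_right_le_imp_le)
  moreover have "0 < real n * lam * d" using pos by simp
  ultimately have "L > 0" by linarith
  then have "X > 0" unfolding X_def using pos(1) \<sigma> b by simp
  have "X * s = L / (real n * lam)" unfolding X_def s_def using \<sigma> b by simp
  then have "d \<le> X * s" using dL pos(1) by (simp add: pos_le_divide_eq mult.commute)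
  have "lam \<noteq> 0" using lam by simp
  then have "bet / lam - 1 = (bet - lam) / lam" "bet / lam + 1 = (bet + lam) / lam"
    by (simp_all add: diff_divide_distrib add_divide_distrib)
  then have "(bet / lam - 1) / (bet / lam + 1) = \<gamma>" unfolding \<gamma>_def using \<open>lam \<noteq> 0\<close> by simp
  then have "I_R L n lam bet \<epsilon> \<delta> \<sigma> = \<lceil>ln X / ln (1 / \<gamma>)\<rceil>"
    unfolding I_R_def Let_def X_def by simp
  then have "ln X / ln (1 / \<gamma>) \<le> real I" using I by (simp add: ceiling_le_iff)
  moreover have "ln (1 / \<gamma>) > 0" using \<gamma> by (subst ln_div) auto
  ultimately have "ln X \<le> real I * ln (1 / \<gamma>)" by (simp add: pos_divide_le_eq)
  also have "\<dots> = ln ((1 / \<gamma>) ^ I)" using \<gamma> by (simp add: ln_realpow)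
  finally have "X \<le> (1 / \<gamma>) ^ I" using ln_le_cancel_iff[OF \<open>X > 0\<close>, of "(1 / \<gamma>) ^ I"] \<gamma> by simp
  then have "\<gamma> ^ I * X \<le> \<gamma> ^ I * (1 / \<gamma>) ^ I" using \<gamma> by (intro mult_left_mono) auto
  also have "\<dots> = 1" using \<gamma> by (simp add: power_mult_distrib[symmetric])
  finally have "\<gamma> ^ I * X \<le> 1" .
  have "\<gamma> ^ I * d \<le> \<gamma> ^ I * (X * s)"
    using \<open>d \<le> X * s\<close> \<gamma> by (intro mult_left_mono) auto
  also have "\<dots> \<le> s"
    using mult_right_mono[OF \<open>\<gamma> ^ I * X \<le> 1\<close>, of s] pos by (simp add: mult.assoc)
  finally show ?thesis unfolding \<gamma>_def s_def .
qed

theorem mainTheorem13: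
  fixes f :: "'a::euclidean_space \<Rightarrow> 'z \<Rightarrow> real"
    and W :: "'a set" and R :: "'z list" and z :: 'z and n :: nat
    and L lam bet \<sigma> \<epsilon> \<delta> :: real and I :: nat and wR wR' :: 'a
  assumes W: "closed W" "convex W" "W \<noteq> {}"
    and diff: "\<forall>z. \<forall>w\<in>W. (\<lambda>w. f w z) differentiable (at w)"
    and lip: "\<forall>z. \<forall>w\<in>W. \<forall>w'\<in>W. \<bar>f w z - f w' z\<bar> \<le> L * dist w w'"
    and n: "length R = n" "n > 0"
    and lam: "0 < lam" "lam < bet"
    and sc: "strongly_convex_on W lam (emp_loss f R)"
    and sm: "smooth_on W bet (emp_loss f R)"
    and wR: "wR \<in> W" "\<forall>w\<in>W. emp_loss f R wR \<le> emp_loss f R w"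
    and wR': "wR' \<in> W" "\<forall>w\<in>W. emp_loss f (R @ [z]) wR' \<le> emp_loss f (R @ [z]) w"
    and \<sigma>: "\<sigma> > 0"
    and \<epsilon>: "0 < \<epsilon>" "\<epsilon> < 1"
    and \<delta>: "0 < \<delta>" "\<delta> < 1"
    and I: "int I \<ge> I_R L n lam bet \<epsilon> \<delta> \<sigma>"
  shows "indistinguishable \<epsilon> \<delta>
           (gauss_output \<sigma> (proj_gd W (grad (emp_loss f R)) (2 / (lam + bet)) wR' I))
           (gauss_output \<sigma> wR)"
proof -
  interpret constrained_strongly_convex W "emp_loss f R" lam bet wR
  proof unfold_locales
    show "emp_loss f R differentiable (at w)" if "w \<in> W" for w
      using diff that by (intro differentiable_emp_loss) auto
  qed (use W lam sc sm wR in auto)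
  have sensitivity: "real n * lam * (dist wR' wR)\<^sup>2 \<le> L * dist wR' wR"
    by (rule emp_loss_minimizers_sensitivity[OF W(2) diff lip n(1) sc wR wR'])
  have "dist (proj_gd W (grad (emp_loss f R)) (2 / (lam + bet)) wR' I) wR
      \<le> ((bet - lam) / (bet + lam)) ^ I * dist wR' wR"
    by (rule dist_proj_gd_minimizer[OF wR'(1)])
  also have "\<dots> \<le> \<sigma> * b_eps_delta \<epsilon> \<delta>"
    by (rule I_R_sufficient[OF lam n(2) \<sigma> b_eps_delta_pos[OF \<epsilon>(1) \<delta>] zero_le_dist sensitivity I])
  finally show ?thesis
    by (intro indistinguishable_gauss_output \<sigma> \<epsilon>(1) \<delta>) (simp add: dist_norm)
qed

end
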